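(* Let $X$ be a non-empty set, $\Lambda$ and $Y$ topological spaces, $y_0\in Y$. Let $\varphi\in\mathcal{G}$, $\Psi\in\mathcal{H}$ and $J\in\mathcal{M}$. Then, for each $\mu>\theta(\varphi,\Psi,J)$ and each filtering cover $\mathcal{N}$ of $X$, there exists $A\in\mathcal{N}$ such that $$\sup_{\lambda\in\Lambda}\inf_{x\in A}\big(J(x)-\mu\varphi(\Psi(x,\lambda))\big)<\inf_{x\in A}\sup_{z\in A}\big(J(x)-\mu\varphi(\Psi(x,\lambda_z))\big).$$
   Context: A family $\mathcal{N}$ of non-empty subsets of $X$ is a filtering cover of $X$ if $\bigcup_{A\in\mathcal{N}}A=X$ and for each $A_1,A_2\in\mathcal{N}$ there is $A_3\in\mathcal{N}$ with $A_1\cup A_2\subseteq A_3$. $\mathcal{G}$ is the family of all lower semicontinuous functions $\varphi:Y\to[0,+\infty[$ with $\varphi^{-1}(0)=\{y_0\}$ such that $\inf_{Y\setminus V}\varphi>0$ for each neighbourhood $V$ of $y_0$. $\mathcal{H}$ is the family of all functions $\Psi:X\times\Lambda\to Y$ such that, for each $x\in X$, $\Psi(x,\cdot)$ is continuous, injective, open, and takes the value $y_0$ at a point $\lambda_x$ (necessarily unique), and the function $x\mapsto\lambda_x$ is not constant. $\mathcal{M}$ is the family of all functions $J:X\to\mathbb{R}$ whose set $M_J$ of global minima is non-empty. For $\varphi\in\mathcal{G}$, $\Psi\in\mathcal{H}$, $J\in\mathcal{M}$, $$\theta(\varphi,\Psi,J)=\inf\left\{\frac{J(x)-J(u)}{\varphi(\Psi(x,\lambda_u))}:(u,x)\in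 M_J\times X,\ \lambda_x\neq\lambda_u\right\}.$$ *)

theory Defs
  imports "HOL-Analysis.Analysis"
begin

definition lsc :: "('y::topological_space \<Rightarrow> real) \<Rightarrow> bool" where
  "lsc \<phi> \<longleftrightarrow> (\<forall>t. open {y. t < \<phi> y})"

definition filtering_cover :: "'a set \<Rightarrow> 'a set set \<Rightarrow> bool" where
  "filtering_cover X N \<longleftrightarrow>
     (\<forall>A\<in>N. A \<noteq> {} \<and> A \<subseteq> X) \<and> \<Union>N = X \<and>
     (\<forall>A1\<in>N. \<forall>A2\<in>N. \<exists>A3\<in>N. A1 \<union> A2 \<subseteq> A3)"

definition is_nhd :: "'y::topological_space set \<Rightarrow> 'y \<Rightarrow> bool" where
  "is_nhd V y \<longleftrightarrow> (\<exists>U. open U \<and> y \<in> U \<and> U \<subseteq> V)"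

text \<open>The family G (depends on y0). The infimum over an empty set is +infinity,
  so "inf > 0" is expressed via extended reals.\<close>
definition classG :: "'y::topological_space \<Rightarrow> ('y \<Rightarrow> real) set" where
  "classG y0 = {\<phi>. lsc \<phi> \<and> (\<forall>y. 0 \<le> \<phi> y) \<and> {y. \<phi> y = 0} = {y0} \<and>
     (\<forall>V. is_nhd V y0 \<longrightarrow> (INF y\<in>UNIV - V. ereal (\<phi> y)) > 0)}"

definition open_map_on :: "('l::topological_space \<Rightarrow> 'y::topological_space) \<Rightarrow> bool" where
  "open_map_on f \<longleftrightarrow> (\<forall>U. open U \<longrightarrow> open (f ` U))"

definition lam :: "('a \<Rightarrow> 'l \<Rightarrow> 'y) \<Rightarrow> 'y \<Rightarrow> 'a \<Rightarrow> 'l" where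
  "lam \<Psi> y0 x = (THE l. \<Psi> x l = y0)"

definition classH :: "'a set \<Rightarrow> 'y::topological_space \<Rightarrow> ('a \<Rightarrow> 'l::topological_space \<Rightarrow> 'y) set" where
  "classH X y0 = {\<Psi>. (\<forall>x\<in>X. continuous_on UNIV (\<Psi> x) \<and> inj (\<Psi> x) \<and> open_map_on (\<Psi> x)
       \<and> (\<exists>l. \<Psi> x l = y0)) \<and> \<not> (\<exists>c. \<forall>x\<in>X. lam \<Psi> y0 x = c)}"

definition minset :: "'a set \<Rightarrow> ('a \<Rightarrow> real) \<Rightarrow> 'a set" where
  "minset X J = {u\<in>X. \<forall>x\<in>X. J u \<le> J x}"

definition classM :: "'a set \<Rightarrow> ('a \<Rightarrow> real) set" where
  "classM X = {J. minset X J \<noteq> {}}"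

definition theta :: "'a set \<Rightarrow> 'y \<Rightarrow> ('y \<Rightarrow> real) \<Rightarrow> ('a \<Rightarrow> 'l \<Rightarrow> 'y) \<Rightarrow> ('a \<Rightarrow> real) \<Rightarrow> ereal" where
  "theta X y0 \<phi> \<Psi> J = (INF p\<in>{(u,x). u \<in> minset X J \<and> x \<in> X \<and> lam \<Psi> y0 x \<noteq> lam \<Psi> y0 u}.
      ereal ((J (snd p) - J (fst p)) / \<phi> (\<Psi> (snd p) (lam \<Psi> y0 (fst p)))))"

end

theory Submission
  imports Defs
begin

text \<open>Take a pair \<open>(u, x)\<close> nearly realising \<open>\<theta>\<close>: \<open>u\<close> minimises \<open>J\<close> and
  \<open>J x - J u < \<mu> \<phi>(\<Psi>(x, \<lambda>\<^sub>u))\<close>. By lower semicontinuity of \<open>\<phi>\<close> this strict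
  inequality persists for \<open>\<lambda>\<close> in a neighbourhood \<open>U\<close> of \<open>\<lambda>\<^sub>u\<close>, while outside
  \<open>U\<close> the point \<open>\<Psi>(u, \<lambda>)\<close> stays away from \<open>y\<^sub>0\<close> (since \<open>\<Psi>(u,\<cdot>)\<close> is open and
  injective), so \<open>\<phi>(\<Psi>(u, \<lambda>))\<close> is bounded below there. Hence on any member
  \<open>A\<close> of the cover containing \<open>u\<close> and \<open>x\<close>, every \<open>\<lambda>\<close> makes the inner infimum
  smaller than \<open>J u\<close> by a uniform margin; the right-hand side is at least
  \<open>J u\<close> because the choice \<open>z = x\<close> annihilates \<open>\<phi>\<close>.\<close>

lemma classG_center:
  assumes "\<phi> \<in> classG y0"
  shows "\<phi> y0 = 0"
  using assms unfolding classG_def by auto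

lemma classG_pos:
  assumes "\<phi> \<in> classG y0" "y \<noteq> y0"
  shows "0 < \<phi> y"
proof -
  have "0 \<le> \<phi> y"
    using assms(1) unfolding classG_def by blast
  moreover have "\<phi> y \<noteq> 0"
    using assms unfolding classG_def by auto
  ultimately show ?thesis
    by linarith
qed

lemma classG_bounded_below_outside:
  assumes "\<phi> \<in> classG y0" "inj g" "open_map_on g" "open U" "l0 \<in> U" "g l0 = y0"
  obtains \<delta> where "0 < \<delta>" "\<And>l. l \<notin> U \<Longrightarrow> \<delta> \<le> \<phi> (g l)"
proof -
  have "is_nhd (g ` U) y0"
    using assms(3-6) unfolding is_nhd_def open_map_on_def by blast
  then have "0 < (INF y\<in>UNIV - g ` U. ereal (\<phi> y))"
    using assms(1) unfolding classG_def by blast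
  then obtain \<delta> where \<delta>: "0 < ereal \<delta>" "ereal \<delta> < (INF y\<in>UNIV - g ` U. ereal (\<phi> y))"
    using ereal_dense2 by blast
  have "\<delta> \<le> \<phi> (g l)" if "l \<notin> U" for l
  proof -
    have "g l \<notin> g ` U"
      using that assms(2) by (auto dest: injD)
    then have "(INF y\<in>UNIV - g ` U. ereal (\<phi> y)) \<le> ereal (\<phi> (g l))"
      by (intro INF_lower) auto
    with \<delta>(2) have "ereal \<delta> < ereal (\<phi> (g l))"
      by (rule less_le_trans)
    then show ?thesis
      by simp
  qed
  with \<delta>(1) that show ?thesis by simp
qed

lemma classH_D:
  assumes "\<Psi> \<in> classH X y0" "x \<in> X"
  shows "continuous_on UNIV (\<Psi> x)" "inj (\<Psi> x)" "open_map_on (\<Psi> x)"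
  using assms unfolding classH_def by blast+

lemma classH_lam:
  assumes "\<Psi> \<in> classH X y0" "x \<in> X"
  shows "\<Psi> x (lam \<Psi> y0 x) = y0"
proof -
  have "\<exists>!l. \<Psi> x l = y0"
    using assms unfolding classH_def by (auto dest: injD)
  then show ?thesis
    unfolding lam_def by (rule theI')
qed

lemma classH_lam_unique:
  assumes "\<Psi> \<in> classH X y0" "x \<in> X" "\<Psi> x l = y0"
  shows "l = lam \<Psi> y0 x"
proof -
  have "inj (\<Psi> x)"
    using assms(1,2) by (rule classH_D)
  moreover have "\<Psi> x l = \<Psi> x (lam \<Psi> y0 x)"
    using assms(3) classH_lam[OF assms(1,2)] by simp
  ultimately show ?thesis
    by (rule injD)
qed

lemma less_theta_witness:
  assumes "\<phi> \<in> classG y0" "\<Psi> \<in> classH X y0" "theta X y0 \<phi> \<Psi> J < ereal \<mu>"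
  obtains u x where "u \<in> minset X J" "x \<in> X" "0 < \<mu>"
    "J x - J u < \<mu> * \<phi> (\<Psi> x (lam \<Psi> y0 u))"
proof -
  obtain u x where ux: "u \<in> minset X J" "x \<in> X" "lam \<Psi> y0 x \<noteq> lam \<Psi> y0 u"
    and quot: "(J x - J u) / \<phi> (\<Psi> x (lam \<Psi> y0 u)) < \<mu>"
    using assms(3) unfolding theta_def by (auto simp: INF_less_iff)
  have "\<Psi> x (lam \<Psi> y0 u) \<noteq> y0"
  proof
    assume "\<Psi> x (lam \<Psi> y0 u) = y0"
    then have "lam \<Psi> y0 u = lam \<Psi> y0 x"
      by (rule classH_lam_unique[OF assms(2) ux(2)])
    with ux(3) show False
      by simp
  qed
  then have pos: "0 < \<phi> (\<Psi> x (lam \<Psi> y0 u))"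
    using classG_pos[OF assms(1)] by blast
  with quot have gap: "J x - J u < \<mu> * \<phi> (\<Psi> x (lam \<Psi> y0 u))"
    by (simp add: divide_less_eq mult.commute)
  have "J u \<le> J x"
    using ux(1,2) unfolding minset_def by blast
  with gap have "0 < \<mu> * \<phi> (\<Psi> x (lam \<Psi> y0 u))"
    by linarith
  from this pos have "0 < \<mu>"
    by (rule zero_less_mult_pos2)
  with ux(1,2) gap that show ?thesis by blast
qed

lemma classG_uniform_gap:
  assumes \<phi>: "\<phi> \<in> classG y0"
    and f: "continuous_on UNIV f"
    and g: "inj g" "open_map_on g" "g l0 = y0"
    and \<mu>: "0 < \<mu>"
    and gap: "a - b < \<mu> * \<phi> (f l0)"
  obtains m where "0 < m" "\<And>l. a - \<mu> * \<phi> (f l) \<le> b - m \<or> b - \<mu> * \<phi> (g l) \<le> b - m"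
proof -
  have "(a - b) / \<mu> < \<phi> (f l0)"
    using gap \<mu> by (simp add: divide_less_eq mult.commute)
  then obtain t where t: "(a - b) / \<mu> < t" "t < \<phi> (f l0)"
    using dense by blast
  define U where "U = f -` {y. t < \<phi> y}"
  have "open {y. t < \<phi> y}"
    using \<phi> unfolding classG_def lsc_def by blast
  then have "open U"
    unfolding U_def using f by (rule open_vimage)
  moreover have "l0 \<in> U"
    unfolding U_def using t(2) by simp
  ultimately obtain \<delta> where \<delta>: "0 < \<delta>" "\<And>l. l \<notin> U \<Longrightarrow> \<delta> \<le> \<phi> (g l)"
    using classG_bounded_below_outside[OF \<phi> g(1,2) _ _ g(3)] by blast
  define m where "m = min (b - a + \<mu> * t) (\<mu> * \<delta>)"
  have "0 < m"
    using t(1) \<mu> \<delta>(1) by (simp add: m_def field_simps)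
  moreover have "a - \<mu> * \<phi> (f l) \<le> b - m \<or> b - \<mu> * \<phi> (g l) \<le> b - m" for l
  proof (cases "l \<in> U")
    case True
    then have "\<mu> * t < \<mu> * \<phi> (f l)"
      using \<mu> unfolding U_def by simp
    then show ?thesis
      unfolding m_def by linarith
  next
    case False
    then have "\<mu> * \<delta> \<le> \<mu> * \<phi> (g l)"
      using \<delta>(2) \<mu> by simp
    then show ?thesis
      unfolding m_def by linarith
  qed
  ultimately show ?thesis
    using that by blast
qed

lemma filtering_cover_common_member:
  assumes "filtering_cover X N" "a \<in> X" "b \<in> X"
  obtains A where "A \<in> N" "a \<in> A" "b \<in> A" "A \<subseteq> X"
proof -
  have sub: "\<And>A. A \<in> N \<Longrightarrow> A \<subseteq> X" and cov: "\<Union>N = X"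
    and dir: "\<And>A1 A2. A1 \<in> N \<Longrightarrow> A2 \<in> N \<Longrightarrow> \<exists>A3\<in>N. A1 \<union> A2 \<subseteq> A3"
    using assms(1) unfolding filtering_cover_def by auto
  obtain A1 A2 where "A1 \<in> N" "a \<in> A1" "A2 \<in> N" "b \<in> A2"
    using cov assms(2,3) by (metis UnionE)
  moreover from dir[OF \<open>A1 \<in> N\<close> \<open>A2 \<in> N\<close>]
  obtain A where "A \<in> N" "A1 \<union> A2 \<subseteq> A" ..
  ultimately show ?thesis
    using sub by (intro that[of A]) auto
qed

lemma SUP_INF_le_of_two_points:
  fixes f :: "'a \<Rightarrow> 'l \<Rightarrow> 'b::complete_lattice"
  assumes "a \<in> A" "b \<in> A" "\<And>l. f a l \<le> c \<or> f b l \<le> c"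
  shows "(SUP l. INF x\<in>A. f x l) \<le> c"
proof (rule SUP_least)
  fix l
  have "(INF x\<in>A. f x l) \<le> f a l" "(INF x\<in>A. f x l) \<le> f b l"
    using assms(1,2) by (auto intro: INF_lower)
  with assms(3)[of l] show "(INF x\<in>A. f x l) \<le> c"
    using order_trans by blast
qed

lemma INF_SUP_ge_diagonal:
  fixes f :: "'a \<Rightarrow> 'a \<Rightarrow> 'b::complete_lattice"
  assumes "\<And>x. x \<in> A \<Longrightarrow> c \<le> f x x"
  shows "c \<le> (INF x\<in>A. SUP z\<in>A. f x z)"
proof (rule INF_greatest)
  fix x
  assume "x \<in> A"
  then have "f x x \<le> (SUP z\<in>A. f x z)"
    by (rule SUP_upper)
  with assms \<open>x \<in> A\<close> show "c \<le> (SUP z\<in>A. f x z)"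
    by (blast intro: order_trans)
qed

theorem theorem3p1:
  fixes X :: "'a set" and y0 :: "'y::topological_space"
    and \<phi> :: "'y \<Rightarrow> real" and \<Psi> :: "'a \<Rightarrow> 'l::topological_space \<Rightarrow> 'y"
    and J :: "'a \<Rightarrow> real" and \<mu> :: real and N :: "'a set set"
  assumes "X \<noteq> {}"
    and "\<phi> \<in> classG y0" and "\<Psi> \<in> classH X y0" and "J \<in> classM X"
    and "ereal \<mu> > theta X y0 \<phi> \<Psi> J"
    and "filtering_cover X N"
  shows "\<exists>A\<in>N. (SUP l. INF x\<in>A. ereal (J x - \<mu> * \<phi> (\<Psi> x l)))
               < (INF x\<in>A. SUP z\<in>A. ereal (J x - \<mu> * \<phi> (\<Psi> x (lam \<Psi> y0 z))))"
proof -
  obtain u x where u: "u \<in> minset X J" and x: "x \<in> X" and "0 < \<mu>"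
    and gap: "J x - J u < \<mu> * \<phi> (\<Psi> x (lam \<Psi> y0 u))"
    by (rule less_theta_witness[OF assms(2,3,5)])
  have u_min: "u \<in> X" "\<And>x. x \<in> X \<Longrightarrow> J u \<le> J x"
    using u unfolding minset_def by auto
  obtain m where "0 < m"
    and m: "\<And>l. J x - \<mu> * \<phi> (\<Psi> x l) \<le> J u - m \<or> J u - \<mu> * \<phi> (\<Psi> u l) \<le> J u - m"
    by (rule classG_uniform_gap[OF assms(2) classH_D(1)[OF assms(3) x]
          classH_D(2,3)[OF assms(3) u_min(1)] classH_lam[OF assms(3) u_min(1)] \<open>0 < \<mu>\<close> gap])
      blast
  obtain A where A: "A \<in> N" "u \<in> A" "x \<in> A" "A \<subseteq> X"
    by (rule filtering_cover_common_member[OF assms(6) u_min(1) x])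
  have "(SUP l. INF z\<in>A. ereal (J z - \<mu> * \<phi> (\<Psi> z l))) \<le> ereal (J u - m)"
    by (rule SUP_INF_le_of_two_points[OF A(3) A(2)]) (use m in simp)
  also have "\<dots> < ereal (J u)"
    using \<open>0 < m\<close> by simp
  also have "\<dots> \<le> (INF z\<in>A. SUP w\<in>A. ereal (J z - \<mu> * \<phi> (\<Psi> z (lam \<Psi> y0 w))))"
  proof (rule INF_SUP_ge_diagonal)
    fix z
    assume "z \<in> A"
    with A(4) have "z \<in> X" by blast
    then show "ereal (J u) \<le> ereal (J z - \<mu> * \<phi> (\<Psi> z (lam \<Psi> y0 z)))"
      using u_min(2) classH_lam[OF assms(3)] classG_center[OF assms(2)] by simp
  qed
  finally show ?thesis
    using A(1) by (rule bexI)
qed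

end
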